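(* Under the mixed membership model with Conditions (C1) and (C2), $\max_{1\le k\le K}\|\mathbf v_k\|_\infty=O(n^{-1/2})$. The same conclusion holds under the degree-corrected mixed membership model with Conditions (C1) and (C4).
   Context: $n$ nodes, $K$ fixed; $\mathbf X$ symmetric binary adjacency matrix (independent Bernoulli entries on/above the diagonal, possibly with zeroed diagonal) with mean structure $\mathbf H$, $\mathbf W=\mathbf X-\mathbf H$, $\alpha_n=\{\max_m\sum_l\mathrm{var}(w_{lm})\}^{1/2}$. DCMM model: $\mathbf H=\boldsymbol\Theta\boldsymbol\Pi\mathbf P\boldsymbol\Pi^T\boldsymbol\Theta$, $\boldsymbol\Theta=\mathrm{diag}(\theta_1,\dots,\theta_n)$, $\theta_l>0$, $\theta_{\max},\theta_{\min}$ max/min; rows $\boldsymbol\pi_l$ of $\boldsymbol\Pi\in\mathbb R^{n\times K}$ probability vectors; $\mathbf P\in[0,1]^{K\times K}$ nonsingular; $\operatorname{rank}\mathbf H=K$. Mixed membership model: $\boldsymbol\Theta=\sqrt\theta\mathbf I_n$, i.e. $\mathbf H=\theta\boldsymbol\Pi\mathbf P\boldsymbol\Pi^T$. $\mathcal N_k=\{l:\boldsymbol\pi_l(k)=1\}$. $\mathbf H=\mathbf V\mathbf D\mathbf V^T$ with $\mathbf D=\mathrm{diag}(d_1,\dots,d_K)$, $|d_1|\ge\dots\ge|d_K|>0$, $\mathbf V=(\mathbf v_1,\dots,\mathbf v_K)$ orthonormal. (C1): constant $c_0>0$, $\min\{|d_a|/|d_b|:a<b,\ d_a\ne-d_b\}\ge1+c_0$,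 $\alpha_n\to\infty$. (C2): constants $0<c_0,c_1<1$: $\lambda_K(\boldsymbol\Pi^T\boldsymbol\Pi)\ge c_0n$, $\lambda_K(\mathbf P)\ge c_0$, $\theta\ge n^{-c_1}$. (C4): constants $c_2,c_3\in(0,1)$, $c_4>0$: $\min_k|\mathcal N_k|\ge c_2n$, $\theta_{\max}\le c_4\theta_{\min}$, $\theta_{\min}^2\ge n^{-c_3}$. *)

theory Defs
  imports Complex_Main "Jordan_Normal_Form.DL_Rank" "Jordan_Normal_Form.Char_Poly"
begin

text \<open>Matrices indexed by natural numbers: an n x K matrix is a function
  nat => nat => real, only entries with row index < n and column index < K matter.
  Indices run from 0 (paper: from 1).\<close>

definition dcmm_H :: "nat \<Rightarrow> (nat \<Rightarrow> real) \<Rightarrow> (nat \<Rightarrow> nat \<Rightarrow> real) \<Rightarrow> (nat \<Rightarrow> nat \<Rightarrow> real)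
    \<Rightarrow> nat \<Rightarrow> nat \<Rightarrow> real" where
  "dcmm_H K th Pm P l m = th l * th m * (\<Sum>a<K. \<Sum>b<K. Pm l a * P a b * Pm m b)"

text \<open>The DCMM model on n nodes with K communities; zd says whether the diagonal of X
  is zeroed. Entries of H that are means of Bernoulli entries of X lie in [0,1].\<close>
definition dcmm_model :: "nat \<Rightarrow> nat \<Rightarrow> bool \<Rightarrow> (nat \<Rightarrow> real) \<Rightarrow> (nat \<Rightarrow> nat \<Rightarrow> real)
    \<Rightarrow> (nat \<Rightarrow> nat \<Rightarrow> real) \<Rightarrow> bool" where
  "dcmm_model n K zd th Pm P \<longleftrightarrow>
     (\<forall>l<n. 0 < th l) \<and>
     (\<forall>l<n. (\<forall>k<K. 0 \<le> Pm l k) \<and> (\<Sum>k<K. Pm l k) = 1) \<and>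
     (\<forall>a<K. \<forall>b<K. 0 \<le> P a b \<and> P a b \<le> 1) \<and>
     det (mat K K (\<lambda>(a,b). P a b)) \<noteq> 0 \<and>
     vec_space.rank n (mat n n (\<lambda>(l,m). dcmm_H K th Pm P l m) :: real mat) = K \<and>
     (\<forall>l<n. \<forall>m<n. (l \<noteq> m \<or> \<not> zd) \<longrightarrow>
        0 \<le> dcmm_H K th Pm P l m \<and> dcmm_H K th Pm P l m \<le> 1)"

definition mm_model :: "nat \<Rightarrow> nat \<Rightarrow> bool \<Rightarrow> real \<Rightarrow> (nat \<Rightarrow> nat \<Rightarrow> real)
    \<Rightarrow> (nat \<Rightarrow> nat \<Rightarrow> real) \<Rightarrow> bool" where
  "mm_model n K zd theta Pm P \<longleftrightarrow> 0 < theta \<and> dcmm_model n K zd (\<lambda>_. sqrt theta) Pm P"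

text \<open>var(w_lm), W = X - H, X_lm ~ Bernoulli(h_lm) independent; if the diagonal is
  zeroed, X_ll = 0 deterministically so var(w_ll) = 0.\<close>
definition var_w :: "bool \<Rightarrow> (nat \<Rightarrow> nat \<Rightarrow> real) \<Rightarrow> nat \<Rightarrow> nat \<Rightarrow> real" where
  "var_w zd H l m = (if l = m \<and> zd then 0 else H l m * (1 - H l m))"

definition alpha_n :: "nat \<Rightarrow> bool \<Rightarrow> (nat \<Rightarrow> nat \<Rightarrow> real) \<Rightarrow> real" where
  "alpha_n n zd H = sqrt (Max ((\<lambda>m. \<Sum>l<n. var_w zd H l m) ` {..<n}))"

definition eig_decomp :: "nat \<Rightarrow> nat \<Rightarrow> (nat \<Rightarrow> nat \<Rightarrow> real) \<Rightarrow> (nat \<Rightarrow> nat \<Rightarrow> real)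
    \<Rightarrow> (nat \<Rightarrow> real) \<Rightarrow> bool" where
  "eig_decomp n K H V d \<longleftrightarrow>
     (\<forall>l<n. \<forall>m<n. H l m = (\<Sum>k<K. d k * V l k * V m k)) \<and>
     (\<forall>j<K. \<forall>k<K. (\<Sum>l<n. V l j * V l k) = (if j = k then 1 else 0)) \<and>
     (\<forall>a<K. \<forall>b<K. a < b \<longrightarrow> \<bar>d b\<bar> \<le> \<bar>d a\<bar>) \<and>
     (\<forall>k<K. d k \<noteq> 0)"

definition eig_gap :: "real \<Rightarrow> nat \<Rightarrow> (nat \<Rightarrow> real) \<Rightarrow> bool" where
  "eig_gap c0 K d \<longleftrightarrow>
     (\<forall>a<K. \<forall>b<K. a < b \<and> d a \<noteq> - d b \<longrightarrow> 1 + c0 \<le> \<bar>d a\<bar> / \<bar>d b\<bar>)"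

definition gram :: "nat \<Rightarrow> nat \<Rightarrow> (nat \<Rightarrow> nat \<Rightarrow> real) \<Rightarrow> real mat" where
  "gram n K Pm = mat K K (\<lambda>(a,b). \<Sum>l<n. Pm l a * Pm l b)"

text \<open>(C2) at a given n: lambda_K(Pm^T Pm) >= c0 n (Pm^T Pm is symmetric PSD, so lambda_K is its
  smallest eigenvalue), lambda_K(P) >= c0 (read as: the K-th eigenvalue in the magnitude
  ordering, i.e. every eigenvalue of P has absolute value >= c0), theta >= n^(-c1).\<close>
definition cond_C2 :: "real \<Rightarrow> real \<Rightarrow> nat \<Rightarrow> nat \<Rightarrow> real \<Rightarrow> (nat \<Rightarrow> nat \<Rightarrow> real)
    \<Rightarrow> (nat \<Rightarrow> nat \<Rightarrow> real) \<Rightarrow> bool" where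
  "cond_C2 c0 c1 n K theta Pm P \<longleftrightarrow>
     (\<forall>\<mu>. eigenvalue (gram n K Pm) \<mu> \<longrightarrow> c0 * real n \<le> \<mu>) \<and>
     (\<forall>\<mu>. eigenvalue (mat K K (\<lambda>(a,b). P a b)) \<mu> \<longrightarrow> c0 \<le> \<bar>\<mu>\<bar>) \<and>
     real n powr (- c1) \<le> theta"

definition pure_nodes :: "nat \<Rightarrow> (nat \<Rightarrow> nat \<Rightarrow> real) \<Rightarrow> nat \<Rightarrow> nat set" where
  "pure_nodes n Pm k = {l. l < n \<and> Pm l k = 1}"

definition cond_C4 :: "real \<Rightarrow> real \<Rightarrow> real \<Rightarrow> nat \<Rightarrow> nat \<Rightarrow> (nat \<Rightarrow> real)
    \<Rightarrow> (nat \<Rightarrow> nat \<Rightarrow> real) \<Rightarrow> bool" where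
  "cond_C4 c2 c3 c4 n K th Pm \<longleftrightarrow>
     (\<forall>k<K. c2 * real n \<le> real (card (pure_nodes n Pm k))) \<and>
     Max (th ` {..<n}) \<le> c4 * Min (th ` {..<n}) \<and>
     real n powr (- c3) \<le> (Min (th ` {..<n}))\<^sup>2"

end

theory Submission
  imports Defs "HOL-Analysis.Analysis"
begin

(* Since H = Theta Pi P Pi^T Theta and H v_k = d_k v_k with d_k <> 0, every eigenvector factors as
   v_k = Theta Pi z with z = P Pi^T Theta v_k / d_k.  Each entry v_k(l) = theta_l (pi_l . z) is thus
   theta_l times a convex combination of the z_a, and it suffices to bound max_a |z_a| using
   |v_k| = 1.  Under (C2), 1 = |Theta Pi z|^2 >= theta z^T Pi^T Pi z >= theta c n |z|^2.  Under (C4),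
   the pure nodes of community a alone give c_2 n theta_min^2 z_a^2 <= 1, and theta_l <= c_4 theta_min.

   The Rayleigh bound x^T G x >= c |x|^2 for a symmetric G with all eigenvalues >= c is obtained
   variationally: a minimiser of x^T G x on the unit sphere exists by compactness and is an
   eigenvector. *)

definition quad_form :: "nat \<Rightarrow> (nat \<Rightarrow> nat \<Rightarrow> real) \<Rightarrow> (nat \<Rightarrow> real) \<Rightarrow> real" where
  "quad_form K G x = (\<Sum>i<K. \<Sum>j<K. x i * G i j * x j)"

definition sum_sq :: "nat \<Rightarrow> (nat \<Rightarrow> real) \<Rightarrow> real" where
  "sum_sq K x = (\<Sum>i<K. (x i)\<^sup>2)"

lemma sum_sq_nonneg: "0 \<le> sum_sq K x"
  unfolding sum_sq_def by (simp add: sum_nonneg)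

lemma sq_le_sum_sq: "i < K \<Longrightarrow> (x i)\<^sup>2 \<le> sum_sq K x"
  unfolding sum_sq_def by (intro member_le_sum) auto

lemma sum_sq_eq_0_iff: "sum_sq K x = 0 \<longleftrightarrow> (\<forall>i<K. x i = 0)"
  unfolding sum_sq_def by (auto simp: sum_nonneg_eq_0_iff)

lemma quad_form_divide: "quad_form K G (\<lambda>i. x i / s) = quad_form K G x / s\<^sup>2"
  unfolding quad_form_def by (simp add: sum_divide_distrib power2_eq_square)

lemma sum_sq_divide: "sum_sq K (\<lambda>i. x i / s) = sum_sq K x / s\<^sup>2"
  unfolding sum_sq_def by (simp add: sum_divide_distrib power_divide)

lemma sum_sq_add_scaled:
  "sum_sq K (\<lambda>i. x i + t * w i) = sum_sq K x + 2 * t * (\<Sum>i<K. w i * x i) + t\<^sup>2 * sum_sq K w"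
  unfolding sum_sq_def
  by (simp add: algebra_simps sum.distrib sum_distrib_left power2_eq_square)

lemma quad_form_add_scaled:
  assumes G_sym: "\<And>i j. i < K \<Longrightarrow> j < K \<Longrightarrow> G i j = G j i"
  shows "quad_form K G (\<lambda>i. x i + t * w i)
    = quad_form K G x + 2 * t * (\<Sum>i<K. w i * (\<Sum>j<K. G i j * x j)) + t\<^sup>2 * quad_form K G w"
proof -
  have "quad_form K G (\<lambda>i. x i + t * w i) = quad_form K G x
      + t * ((\<Sum>i<K. \<Sum>j<K. x i * G i j * w j) + (\<Sum>i<K. \<Sum>j<K. w i * G i j * x j))
      + t\<^sup>2 * quad_form K G w"
    unfolding quad_form_def
    by (simp add: algebra_simps sum.distrib sum_distrib_left power2_eq_square)
  moreover have "(\<Sum>i<K. \<Sum>j<K. x i * G i j * w j) = (\<Sum>j<K. \<Sum>i<K. x i * G i j * w j)"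
    by (rule sum.swap)
  also have "\<dots> = (\<Sum>i<K. w i * (\<Sum>j<K. G i j * x j))"
    by (auto intro!: sum.cong simp: G_sym sum_distrib_left mult_ac)
  moreover have "(\<Sum>i<K. \<Sum>j<K. w i * G i j * x j) = (\<Sum>i<K. w i * (\<Sum>j<K. G i j * x j))"
    by (simp add: sum_distrib_left mult_ac)
  ultimately show ?thesis by simp
qed

lemma quad_form_attains_min_on_sphere:
  assumes "0 < K"
  obtains x0 where "sum_sq K x0 = 1" "\<And>x. sum_sq K x = 1 \<Longrightarrow> quad_form K G x0 \<le> quad_form K G x"
proof -
  define box where "box = Pi\<^sub>E UNIV (\<lambda>i. if i < K then {-1..1::real} else {0})"
  define S where "S = box \<inter> sum_sq K -` {1}"
  have "compactin (product_topology (\<lambda>i. euclidean) UNIV) box"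
    unfolding box_def by (subst compactin_PiE) auto
  then have "compact box" by (simp add: euclidean_product_topology)
  moreover have "closed (sum_sq K -` {1})"
    unfolding sum_sq_def
    by (intro closed_vimage continuous_intros continuous_on_product_coordinates)
  ultimately have "compact S" unfolding S_def by (rule compact_Int_closed)
  have "(\<lambda>i. if i = 0 then 1 else 0) \<in> S"
    using assms by (auto simp: S_def box_def sum_sq_def if_distrib[of power2] cong: if_cong)
  moreover have "continuous_on UNIV (quad_form K G)"
    unfolding quad_form_def by (intro continuous_intros continuous_on_product_coordinates)
  ultimately obtain x0 where x0: "x0 \<in> S" "\<And>y. y \<in> S \<Longrightarrow> quad_form K G x0 \<le> quad_form K G y"
    using continuous_attains_inf[OF \<open>compact S\<close> _ continuous_on_subset[OF _ subset_UNIV]]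
    by blast
  show ?thesis
  proof
    show "sum_sq K x0 = 1" using x0(1) by (simp add: S_def)
    fix x assume x: "sum_sq K x = 1"
    define y where "y = (\<lambda>i. if i < K then x i else 0)"
    have "\<bar>x i\<bar> \<le> 1" if "i < K" for i
      using sq_le_sum_sq[OF that, of x] x by (simp add: abs_square_le_1[symmetric])
    then have "y \<in> box" by (auto simp: y_def box_def abs_le_iff)
    moreover have "sum_sq K y = sum_sq K x" "quad_form K G y = quad_form K G x"
      by (simp_all add: y_def sum_sq_def quad_form_def)
    ultimately show "quad_form K G x0 \<le> quad_form K G x"
      using x x0(2)[of y] by (simp add: S_def)
  qed
qed

lemma quad_form_ge_min_on_sphere:
  assumes min: "\<And>x. sum_sq K x = 1 \<Longrightarrow> m \<le> quad_form K G x"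
  shows "m * sum_sq K x \<le> quad_form K G x"
proof (cases "sum_sq K x = 0")
  case True
  then have "quad_form K G x = 0" by (simp add: sum_sq_eq_0_iff quad_form_def)
  with True show ?thesis by simp
next
  case False
  define s where "s = sqrt (sum_sq K x)"
  have s2: "s\<^sup>2 = sum_sq K x" using sum_sq_nonneg[of K x] by (simp add: s_def)
  have "m \<le> quad_form K G (\<lambda>i. x i / s)"
    using min False by (simp add: sum_sq_divide s2)
  then show ?thesis
    using False sum_sq_nonneg[of K x] by (simp add: quad_form_divide s2 field_simps)
qed

lemma linear_coeff_eq_0_if_nonneg:
  fixes a b :: real
  assumes "\<And>t. 0 \<le> a * t + b * t\<^sup>2"
  shows "a = 0"
proof (rule ccontr)
  assume "a \<noteq> 0"
  define s where "s = \<bar>b\<bar> + 1"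
  have "0 < s" "b < s" by (auto simp: s_def)
  have "0 \<le> a * (- a / s) + b * (- a / s)\<^sup>2" by (rule assms)
  also have "\<dots> = a\<^sup>2 * (b - s) / s\<^sup>2"
    using \<open>0 < s\<close> by (simp add: field_simps power2_eq_square)
  also have "\<dots> < 0"
    using \<open>a \<noteq> 0\<close> \<open>0 < s\<close> \<open>b < s\<close> by (intro divide_neg_pos mult_pos_neg) auto
  finally show False by simp
qed

lemma sphere_minimizer_stationary:
  assumes G_sym: "\<And>i j. i < K \<Longrightarrow> j < K \<Longrightarrow> G i j = G j i"
    and x0: "sum_sq K x0 = 1"
    and min: "\<And>x. sum_sq K x = 1 \<Longrightarrow> quad_form K G x0 \<le> quad_form K G x"
    and "i < K"
  shows "(\<Sum>j<K. G i j * x0 j) = quad_form K G x0 * x0 i"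
proof -
  define m where "m = quad_form K G x0"
  define w where "w i = (\<Sum>j<K. G i j * x0 j) - m * x0 i" for i
  \<comment> \<open>along x0 + t w the form quad_form - m * sum_sq is nonnegative with linear coefficient 2 |w|^2\<close>
  have lin: "(\<Sum>i<K. w i * (\<Sum>j<K. G i j * x0 j)) - m * (\<Sum>i<K. w i * x0 i) = sum_sq K w"
    unfolding sum_sq_def power2_eq_square
    by (simp add: w_def algebra_simps sum_subtractf sum_distrib_left)
  have "0 \<le> 2 * sum_sq K w * t + (quad_form K G w - m * sum_sq K w) * t\<^sup>2" for t
  proof -
    have "0 \<le> quad_form K G (\<lambda>i. x0 i + t * w i) - m * sum_sq K (\<lambda>i. x0 i + t * w i)"
      using quad_form_ge_min_on_sphere[of K m G] min by (simp add: m_def)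
    also have "\<dots> = 2 * ((\<Sum>i<K. w i * (\<Sum>j<K. G i j * x0 j)) - m * (\<Sum>i<K. w i * x0 i)) * t
        + (quad_form K G w - m * sum_sq K w) * t\<^sup>2"
      using quad_form_add_scaled[of K G x0 t w, OF G_sym] sum_sq_add_scaled[of K x0 t w] x0
      by (simp add: m_def algebra_simps)
    finally show ?thesis by (simp only: lin)
  qed
  then have "2 * sum_sq K w = 0" by (rule linear_coeff_eq_0_if_nonneg)
  then have "w i = 0" using \<open>i < K\<close> by (simp add: sum_sq_eq_0_iff)
  then show ?thesis by (simp add: w_def m_def)
qed

lemma quad_form_ge_eigenvalue_bound:
  assumes G_sym: "\<And>i j. i < K \<Longrightarrow> j < K \<Longrightarrow> G i j = G j i"
    and eig: "\<And>\<mu>. eigenvalue (Matrix.mat K K (\<lambda>(i, j). G i j)) \<mu> \<Longrightarrow> c \<le> \<mu>"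
  shows "c * sum_sq K x \<le> quad_form K G x"
proof (cases "K = 0")
  case True
  then show ?thesis by (simp add: sum_sq_def quad_form_def)
next
  case False
  then obtain x0 where x0: "sum_sq K x0 = 1"
    and min: "\<And>x. sum_sq K x = 1 \<Longrightarrow> quad_form K G x0 \<le> quad_form K G x"
    using quad_form_attains_min_on_sphere by blast
  have "Matrix.vec K x0 \<noteq> 0\<^sub>v K"
  proof
    assume "Matrix.vec K x0 = 0\<^sub>v K"
    then have "\<forall>i<K. x0 i = 0" by (metis index_vec index_zero_vec(1))
    then have "sum_sq K x0 = 0" by (simp add: sum_sq_eq_0_iff)
    with x0 show False by simp
  qed
  moreover have "Matrix.mat K K (\<lambda>(i, j). G i j) *\<^sub>v Matrix.vec K x0
      = quad_form K G x0 \<cdot>\<^sub>v Matrix.vec K x0"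
    using sphere_minimizer_stationary[OF G_sym x0 min]
    by (intro eq_vecI) (auto simp: scalar_prod_def atLeast0LessThan)
  ultimately have "eigenvalue (Matrix.mat K K (\<lambda>(i, j). G i j)) (quad_form K G x0)"
    unfolding eigenvalue_def eigenvector_def by (intro exI[of _ "Matrix.vec K x0"]) auto
  then have "c \<le> quad_form K G x0" by (rule eig)
  then have "c * sum_sq K x \<le> quad_form K G x0 * sum_sq K x"
    using sum_sq_nonneg by (rule mult_right_mono)
  also have "\<dots> \<le> quad_form K G x"
    using min by (rule quad_form_ge_min_on_sphere)
  finally show ?thesis .
qed

lemma eig_decomp_eigenvector:
  assumes "eig_decomp n K H V d" "k < K" "l < n"
  shows "(\<Sum>m<n. H l m * V m k) = d k * V l k"
proof -
  have H: "H l m = (\<Sum>j<K. d j * V l j * V m j)" if "m < n" for m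
    using assms that by (simp add: eig_decomp_def)
  have orth: "(\<Sum>m<n. V m j * V m k) = (if j = k then 1 else 0)" if "j < K" for j
    using assms that by (simp add: eig_decomp_def)
  have "(\<Sum>m<n. H l m * V m k) = (\<Sum>j<K. d j * V l j * (\<Sum>m<n. V m j * V m k))"
    by (simp add: H sum_distrib_left sum_distrib_right mult_ac sum.swap[of _ "{..<K}"])
  also have "\<dots> = (\<Sum>j<K. if j = k then d j * V l j else 0)"
    by (rule sum.cong) (simp_all add: orth)
  also have "\<dots> = d k * V l k"
    using \<open>k < K\<close> by simp
  finally show ?thesis .
qed

lemma eig_decomp_column_sum_sq:
  assumes "eig_decomp n K H V d" "k < K"
  shows "(\<Sum>m<n. (V m k)\<^sup>2) = 1"
  using assms by (simp add: eig_decomp_def power2_eq_square)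

lemma dcmm_eigenvector_factor:
  assumes ed: "eig_decomp n K (dcmm_H K th Pm P) V d" and "k < K"
  obtains z where "\<And>l. l < n \<Longrightarrow> V l k = th l * (\<Sum>a<K. Pm l a * z a)"
proof
  fix l assume "l < n"
  define y where "y a = (\<Sum>b<K. P a b * (\<Sum>m<n. th m * Pm m b * V m k))" for a
  have "d k * V l k = (\<Sum>m<n. dcmm_H K th Pm P l m * V m k)"
    using eig_decomp_eigenvector[OF ed \<open>k < K\<close> \<open>l < n\<close>] by simp
  also have "\<dots> = th l * (\<Sum>a<K. Pm l a * y a)"
    by (simp add: dcmm_H_def y_def sum_distrib_left sum_distrib_right mult_ac
        sum.swap[of _ "{..<n}"])
  finally have eq: "d k * V l k = th l * (\<Sum>a<K. Pm l a * y a)" .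
  have "d k \<noteq> 0" using ed \<open>k < K\<close> by (simp add: eig_decomp_def)
  then have "V l k = d k * V l k / d k" by simp
  also have "\<dots> = th l * ((\<Sum>a<K. Pm l a * y a) / d k)" by (simp add: eq)
  also have "\<dots> = th l * (\<Sum>a<K. Pm l a * (y a / d k))" by (simp add: sum_divide_distrib)
  finally show "V l k = th l * (\<Sum>a<K. Pm l a * (y a / d k))" .
qed

lemma abs_convex_comb_le:
  fixes p z :: "nat \<Rightarrow> real"
  assumes "\<forall>a<K. 0 \<le> p a" "(\<Sum>a<K. p a) = 1" "\<And>a. a < K \<Longrightarrow> \<bar>z a\<bar> \<le> B"
  shows "\<bar>\<Sum>a<K. p a * z a\<bar> \<le> B"
proof -
  have "\<bar>\<Sum>a<K. p a * z a\<bar> \<le> (\<Sum>a<K. p a * \<bar>z a\<bar>)"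
    using sum_abs[of "\<lambda>a. p a * z a" "{..<K}"] assms(1) by (simp add: abs_mult)
  also have "\<dots> \<le> (\<Sum>a<K. p a * B)"
    using assms by (intro sum_mono mult_left_mono) auto
  also have "\<dots> = B" using assms(2) by (simp add: sum_distrib_right[symmetric])
  finally show ?thesis .
qed

lemma abs_le_inverse_sqrt:
  fixes s x :: real
  assumes "0 < s" "s * x\<^sup>2 \<le> 1"
  shows "\<bar>x\<bar> \<le> 1 / sqrt s"
proof -
  have "x\<^sup>2 \<le> 1 / s" using assms by (simp add: field_simps)
  then have "sqrt (x\<^sup>2) \<le> sqrt (1 / s)" by (rule real_sqrt_le_mono)
  then show ?thesis by (simp add: real_sqrt_divide)
qed

lemma sum_sq_mixture_eq_quad_form_gram:
  "(\<Sum>m<n. (\<Sum>a<K. Pm m a * z a)\<^sup>2) = quad_form K (\<lambda>a b. \<Sum>m<n. Pm m a * Pm m b) z"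
  unfolding quad_form_def power2_eq_square
  by (simp add: sum_product sum_distrib_left sum_distrib_right mult_ac sum.swap[of _ "{..<n}"])

lemma mixture_coef_bound_gram:
  assumes gram_eig: "\<And>\<mu>. eigenvalue (gram n K Pm) \<mu> \<Longrightarrow> c * real n \<le> \<mu>" and "0 \<le> c"
    and th: "\<And>m. m < n \<Longrightarrow> tmin \<le> th m" "0 \<le> tmin"
    and norm: "(\<Sum>m<n. (th m * (\<Sum>a<K. Pm m a * z a))\<^sup>2) \<le> 1"
    and "a < K"
  shows "tmin\<^sup>2 * (c * real n) * (z a)\<^sup>2 \<le> 1"
proof -
  define G where "G a b = (\<Sum>m<n. Pm m a * Pm m b)" for a b
  have "c * real n * (z a)\<^sup>2 \<le> c * real n * sum_sq K z"
    using \<open>0 \<le> c\<close> \<open>a < K\<close> by (intro mult_left_mono sq_le_sum_sq) auto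
  also have "\<dots> \<le> quad_form K G z"
    using gram_eig by (intro quad_form_ge_eigenvalue_bound) (auto simp: G_def gram_def mult.commute)
  also have "\<dots> = (\<Sum>m<n. (\<Sum>a<K. Pm m a * z a)\<^sup>2)"
    unfolding G_def by (rule sum_sq_mixture_eq_quad_form_gram[symmetric])
  finally have "tmin\<^sup>2 * (c * real n * (z a)\<^sup>2) \<le> tmin\<^sup>2 * (\<Sum>m<n. (\<Sum>a<K. Pm m a * z a)\<^sup>2)"
    by (rule mult_left_mono) simp
  also have "\<dots> = (\<Sum>m<n. tmin\<^sup>2 * (\<Sum>a<K. Pm m a * z a)\<^sup>2)"
    by (rule sum_distrib_left)
  also have "\<dots> \<le> (\<Sum>m<n. (th m * (\<Sum>a<K. Pm m a * z a))\<^sup>2)"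
    using th by (intro sum_mono) (auto simp: power_mult_distrib intro!: mult_right_mono power_mono)
  also have "\<dots> \<le> 1" by (rule norm)
  finally show ?thesis by (simp add: mult.assoc)
qed

lemma pure_node_mixture:
  fixes p z :: "nat \<Rightarrow> real"
  assumes "\<forall>b<K. 0 \<le> p b" "(\<Sum>b<K. p b) = 1" "p a = 1" "a < K"
  shows "(\<Sum>b<K. p b * z b) = z a"
proof -
  have "(\<Sum>b\<in>{..<K} - {a}. p b) = 0"
    using assms by (simp add: sum.remove)
  then have "\<forall>b\<in>{..<K} - {a}. p b = 0"
    using assms(1) by (subst (asm) sum_nonneg_eq_0_iff) auto
  then show ?thesis
    using assms by (simp add: sum.remove)
qed

lemma mixture_coef_bound_pure_nodes:
  assumes rows: "\<And>m. m < n \<Longrightarrow> (\<forall>b<K. 0 \<le> Pm m b) \<and> (\<Sum>b<K. Pm m b) = 1"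
    and pure: "c * real n \<le> real (card (pure_nodes n Pm a))"
    and th: "\<And>m. m < n \<Longrightarrow> tmin \<le> th m" "0 \<le> tmin"
    and norm: "(\<Sum>m<n. (th m * (\<Sum>b<K. Pm m b * z b))\<^sup>2) \<le> 1"
    and "a < K"
  shows "tmin\<^sup>2 * (c * real n) * (z a)\<^sup>2 \<le> 1"
proof -
  let ?N = "pure_nodes n Pm a"
  have N: "?N \<subseteq> {..<n}" by (auto simp: pure_nodes_def)
  have "tmin\<^sup>2 * (c * real n) * (z a)\<^sup>2 \<le> real (card ?N) * (tmin\<^sup>2 * (z a)\<^sup>2)"
    using mult_right_mono[OF pure, of "tmin\<^sup>2 * (z a)\<^sup>2"] by (simp add: mult_ac)
  also have "\<dots> = (\<Sum>m\<in>?N. tmin\<^sup>2 * (z a)\<^sup>2)" by simp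
  also have "\<dots> \<le> (\<Sum>m\<in>?N. (th m * (\<Sum>b<K. Pm m b * z b))\<^sup>2)"
  proof (rule sum_mono)
    fix m assume m: "m \<in> ?N"
    then have "(\<Sum>b<K. Pm m b * z b) = z a"
      using rows \<open>a < K\<close> by (intro pure_node_mixture) (auto simp: pure_nodes_def)
    moreover have "tmin\<^sup>2 \<le> (th m)\<^sup>2" using m th by (intro power_mono) (auto simp: pure_nodes_def)
    ultimately show "tmin\<^sup>2 * (z a)\<^sup>2 \<le> (th m * (\<Sum>b<K. Pm m b * z b))\<^sup>2"
      by (simp add: power_mult_distrib mult_right_mono)
  qed
  also have "\<dots> \<le> (\<Sum>m<n. (th m * (\<Sum>b<K. Pm m b * z b))\<^sup>2)"
    using N by (intro sum_mono2) auto
  also have "\<dots> \<le> 1" by (rule norm)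
  finally show ?thesis .
qed

lemma mixture_entry_le:
  fixes p z :: "nat \<Rightarrow> real"
  assumes V: "v = t * (\<Sum>a<K. p a * z a)" and "0 \<le> t"
    and row: "\<forall>a<K. 0 \<le> p a" "(\<Sum>a<K. p a) = 1"
    and coef: "\<And>a. a < K \<Longrightarrow> s * (z a)\<^sup>2 \<le> 1" and "0 < s"
  shows "\<bar>v\<bar> \<le> t / sqrt s"
proof -
  have "\<bar>\<Sum>a<K. p a * z a\<bar> \<le> 1 / sqrt s"
    by (intro abs_convex_comb_le[OF row] abs_le_inverse_sqrt[OF \<open>0 < s\<close> coef])
  then have "t * \<bar>\<Sum>a<K. p a * z a\<bar> \<le> t * (1 / sqrt s)"
    using \<open>0 \<le> t\<close> by (rule mult_left_mono)
  then show ?thesis using V \<open>0 \<le> t\<close> by (simp add: abs_mult)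
qed

lemma mm_eigenvector_entry_bound:
  assumes mm: "mm_model n K zd theta Pm P"
    and ed: "eig_decomp n K (dcmm_H K (\<lambda>_. sqrt theta) Pm P) V d"
    and C2: "cond_C2 c c1 n K theta Pm P" and "0 < c" "k < K" "l < n"
  shows "\<bar>V l k\<bar> \<le> (1 / sqrt c) / sqrt (real n)"
proof -
  obtain z where V: "\<And>m. m < n \<Longrightarrow> V m k = sqrt theta * (\<Sum>a<K. Pm m a * z a)"
    using dcmm_eigenvector_factor[OF ed \<open>k < K\<close>] by blast
  have "0 < theta" and rows: "\<And>m. m < n \<Longrightarrow> (\<forall>a<K. 0 \<le> Pm m a) \<and> (\<Sum>a<K. Pm m a) = 1"
    using mm by (auto simp: mm_model_def dcmm_model_def)
  have "(\<Sum>m<n. (sqrt theta * (\<Sum>a<K. Pm m a * z a))\<^sup>2) = 1"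
    using eig_decomp_column_sum_sq[OF ed \<open>k < K\<close>] V by simp
  then have "(sqrt theta)\<^sup>2 * (c * real n) * (z a)\<^sup>2 \<le> 1" if "a < K" for a
    using C2 \<open>0 < c\<close> \<open>0 < theta\<close> \<open>a < K\<close>
    by (intro mixture_coef_bound_gram[where th = "\<lambda>_. sqrt theta"]) (auto simp: cond_C2_def)
  then have "\<bar>V l k\<bar> \<le> sqrt theta / sqrt ((sqrt theta)\<^sup>2 * (c * real n))"
    using V[OF \<open>l < n\<close>] rows[OF \<open>l < n\<close>] \<open>0 < theta\<close> \<open>0 < c\<close> \<open>l < n\<close>
    by (intro mixture_entry_le) auto
  also have "\<dots> = (1 / sqrt c) / sqrt (real n)"
    using \<open>0 < theta\<close> by (simp add: real_sqrt_mult)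
  finally show ?thesis .
qed

lemma dcmm_eigenvector_entry_bound:
  assumes dcmm: "dcmm_model n K zd th Pm P"
    and ed: "eig_decomp n K (dcmm_H K th Pm P) V d"
    and C4: "cond_C4 c2 c3 c4 n K th Pm" and "0 < c2" "k < K" "l < n"
  shows "\<bar>V l k\<bar> \<le> (c4 / sqrt c2) / sqrt (real n)"
proof -
  obtain z where V: "\<And>m. m < n \<Longrightarrow> V m k = th m * (\<Sum>a<K. Pm m a * z a)"
    using dcmm_eigenvector_factor[OF ed \<open>k < K\<close>] by blast
  have th_pos: "\<And>m. m < n \<Longrightarrow> 0 < th m"
    and rows: "\<And>m. m < n \<Longrightarrow> (\<forall>a<K. 0 \<le> Pm m a) \<and> (\<Sum>a<K. Pm m a) = 1"
    using dcmm by (auto simp: dcmm_model_def)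
  define tmin where "tmin = Min (th ` {..<n})"
  have tmin_le: "\<And>m. m < n \<Longrightarrow> tmin \<le> th m" by (simp add: tmin_def)
  have "tmin \<in> th ` {..<n}" unfolding tmin_def using \<open>l < n\<close> by (intro Min_in) auto
  then have "0 < tmin" using th_pos by auto
  have "th l \<le> Max (th ` {..<n})" using \<open>l < n\<close> by simp
  also have "\<dots> \<le> c4 * tmin" using C4 by (simp add: cond_C4_def tmin_def)
  finally have th_l: "th l \<le> c4 * tmin" .
  have "(\<Sum>m<n. (th m * (\<Sum>a<K. Pm m a * z a))\<^sup>2) = 1"
    using eig_decomp_column_sum_sq[OF ed \<open>k < K\<close>] V by simp
  then have "tmin\<^sup>2 * (c2 * real n) * (z a)\<^sup>2 \<le> 1" if "a < K" for a
    using rows C4 tmin_le \<open>0 < tmin\<close> \<open>a < K\<close>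
    by (intro mixture_coef_bound_pure_nodes[where Pm = Pm and th = th])
      (auto simp: cond_C4_def)
  then have "\<bar>V l k\<bar> \<le> th l / sqrt (tmin\<^sup>2 * (c2 * real n))"
    using V[OF \<open>l < n\<close>] rows[OF \<open>l < n\<close>] th_pos[OF \<open>l < n\<close>] \<open>0 < tmin\<close> \<open>0 < c2\<close> \<open>l < n\<close>
    by (intro mixture_entry_le) auto
  also have "\<dots> \<le> c4 * tmin / sqrt (tmin\<^sup>2 * (c2 * real n))"
    using th_l \<open>0 < c2\<close> by (intro divide_right_mono) auto
  also have "\<dots> = (c4 / sqrt c2) / sqrt (real n)"
    using \<open>0 < tmin\<close> by (simp add: real_sqrt_mult)
  finally show ?thesis .
qed

theorem lemma7:
  fixes K :: nat
  shows
  "(\<forall>(zd::bool) (theta::nat \<Rightarrow> real) (Pm::nat \<Rightarrow> nat \<Rightarrow> nat \<Rightarrow> real)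
       (P::nat \<Rightarrow> nat \<Rightarrow> nat \<Rightarrow> real) (V::nat \<Rightarrow> nat \<Rightarrow> nat \<Rightarrow> real) (d::nat \<Rightarrow> nat \<Rightarrow> real)
       (c0::real) (c0'::real) (c1::real).
      (\<forall>\<^sub>F n in sequentially.
          mm_model n K zd (theta n) (Pm n) (P n) \<and>
          eig_decomp n K (dcmm_H K (\<lambda>_. sqrt (theta n)) (Pm n) (P n)) (V n) (d n) \<and>
          eig_gap c0 K (d n) \<and>
          cond_C2 c0' c1 n K (theta n) (Pm n) (P n)) \<and>
      0 < c0 \<and>
      filterlim (\<lambda>n. alpha_n n zd (dcmm_H K (\<lambda>_. sqrt (theta n)) (Pm n) (P n))) at_top sequentially \<and>
      0 < c0' \<and> c0' < 1 \<and> 0 < c1 \<and> c1 < 1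
    \<longrightarrow> (\<exists>C. \<forall>\<^sub>F n in sequentially. \<forall>k<K. \<forall>l<n. \<bar>V n l k\<bar> \<le> C / sqrt (real n)))
   \<and>
   (\<forall>(zd::bool) (th::nat \<Rightarrow> nat \<Rightarrow> real) (Pm::nat \<Rightarrow> nat \<Rightarrow> nat \<Rightarrow> real)
       (P::nat \<Rightarrow> nat \<Rightarrow> nat \<Rightarrow> real) (V::nat \<Rightarrow> nat \<Rightarrow> nat \<Rightarrow> real) (d::nat \<Rightarrow> nat \<Rightarrow> real)
       (c0::real) (c2::real) (c3::real) (c4::real).
      (\<forall>\<^sub>F n in sequentially.
          dcmm_model n K zd (th n) (Pm n) (P n) \<and>
          eig_decomp n K (dcmm_H K (th n) (Pm n) (P n)) (V n) (d n) \<and>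
          eig_gap c0 K (d n) \<and>
          cond_C4 c2 c3 c4 n K (th n) (Pm n)) \<and>
      0 < c0 \<and>
      filterlim (\<lambda>n. alpha_n n zd (dcmm_H K (th n) (Pm n) (P n))) at_top sequentially \<and>
      0 < c2 \<and> c2 < 1 \<and> 0 < c3 \<and> c3 < 1 \<and> 0 < c4
    \<longrightarrow> (\<exists>C. \<forall>\<^sub>F n in sequentially. \<forall>k<K. \<forall>l<n. \<bar>V n l k\<bar> \<le> C / sqrt (real n)))"
proof (intro conjI allI impI, goal_cases mixed_membership degree_corrected)
  case (mixed_membership zd theta Pm P V d c0 c0' c1)
  then have "\<forall>\<^sub>F n in sequentially. \<forall>k<K. \<forall>l<n. \<bar>V n l k\<bar> \<le> (1 / sqrt c0') / sqrt (real n)"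
    by (elim conjE eventually_mono) (blast intro: mm_eigenvector_entry_bound)
  then show ?case ..
next
  case (degree_corrected zd th Pm P V d c0 c2 c3 c4)
  then have "\<forall>\<^sub>F n in sequentially. \<forall>k<K. \<forall>l<n. \<bar>V n l k\<bar> \<le> (c4 / sqrt c2) / sqrt (real n)"
    by (elim conjE eventually_mono) (blast intro: dcmm_eigenvector_entry_bound)
  then show ?case ..
qed

end
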